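(* Let $k$ be a domain, $R = k[X_0,\dots,X_m]/J$ a graded domain with $X_0,\dots,X_m$ variables of positive integer weights $A_0,\dots,A_m$ and $J$ a homogeneous ideal, let $A=\operatorname{lcm}(A_0,\dots,A_m)$ and $I=R_{\ge mA}$. Let $p\ge 2$ be an integer. If $I^{p-1}=R_{\ge (p-1)mA}$, then $I^p = R_{\ge pmA}$.
   Context: $R$ is $\mathbb N$-graded via $\deg X_i=A_i$, and $X_i$ also denotes its image in $R$. For a nonnegative integer $\alpha$, $R_{\ge\alpha}$ denotes the ideal of $R$ generated by all homogeneous elements of degree at least $\alpha$. *)

theory Defs
  imports "HOL-Library.Poly_Mapping" "HOL-Algebra.QuotRing" "HOL-Algebra.Ideal_Product"
begin

text \<open>Polynomial ring k[X_i : i in 'n] over a commutative ring k, with finitely many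
  variables indexed by the finite type 'n (so m + 1 = CARD('n)).\<close>

type_synonym ('n, 'k) mpoly = "('n \<Rightarrow>\<^sub>0 nat) \<Rightarrow>\<^sub>0 'k"

definition poly_ring :: "('n, 'k::comm_ring_1) mpoly ring" where
  "poly_ring = \<lparr>carrier = UNIV, monoid.mult = (*), one = 1, zero = 0, add = (+)\<rparr>"

definition Var :: "'n \<Rightarrow> ('n, 'k::comm_ring_1) mpoly" where
  "Var i = Poly_Mapping.single (Poly_Mapping.single i 1) 1"

definition wdeg :: "('n::finite \<Rightarrow> nat) \<Rightarrow> ('n \<Rightarrow>\<^sub>0 nat) \<Rightarrow> nat" where
  "wdeg A a = (\<Sum>i\<in>UNIV. Poly_Mapping.lookup a i * A i)"

definition whomogeneous :: "('n::finite \<Rightarrow> nat) \<Rightarrow> nat \<Rightarrow> ('n, 'k::comm_ring_1) mpoly \<Rightarrow> bool" where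
  "whomogeneous A d f \<longleftrightarrow> (\<forall>a\<in>Poly_Mapping.keys f. wdeg A a = d)"

definition hcomp :: "('n::finite \<Rightarrow> nat) \<Rightarrow> nat \<Rightarrow> ('n, 'k::comm_ring_1) mpoly \<Rightarrow> ('n, 'k) mpoly" where
  "hcomp A d f = Abs_poly_mapping (\<lambda>a. if wdeg A a = d then Poly_Mapping.lookup f a else 0)"

definition homogeneous_ideal :: "('n::finite \<Rightarrow> nat) \<Rightarrow> ('n, 'k::comm_ring_1) mpoly set \<Rightarrow> bool" where
  "homogeneous_ideal A J \<longleftrightarrow> ideal J poly_ring \<and> (\<forall>f\<in>J. \<forall>d. hcomp A d f \<in> J)"

abbreviation quot_ring :: "('n, 'k::comm_ring_1) mpoly set \<Rightarrow> ('n, 'k) mpoly set ring" where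
  "quot_ring J \<equiv> poly_ring Quot J"

definition R_hom :: "('n::finite \<Rightarrow> nat) \<Rightarrow> ('n, 'k::comm_ring_1) mpoly set \<Rightarrow> nat \<Rightarrow> ('n, 'k) mpoly set set" where
  "R_hom A J d = {J +>\<^bsub>poly_ring\<^esub> f | f. whomogeneous A d f}"

definition R_ge :: "('n::finite \<Rightarrow> nat) \<Rightarrow> ('n, 'k::comm_ring_1) mpoly set \<Rightarrow> nat \<Rightarrow> ('n, 'k) mpoly set set" where
  "R_ge A J \<alpha> = genideal (quot_ring J) (\<Union>d\<in>{\<alpha>..}. R_hom A J d)"

abbreviation ideal_power :: "('a, 'b) ring_scheme \<Rightarrow> 'a set \<Rightarrow> nat \<Rightarrow> 'a set" where
  "ideal_power S I n \<equiv> I [^]\<^bsub>ideals_set S\<^esub> n"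

end

theory Submission
  imports Defs
begin

text \<open>Write \<open>L = Lcm A\<^sub>i\<close> and \<open>n = m + 1\<close> for the number of variables. The key fact is
  combinatorial: a monomial \<open>X\<^sup>e\<close> of weighted degree at least \<open>(k + n - 1) L\<close> has a factor of
  weighted degree exactly \<open>k L\<close>. Indeed, writing \<open>e\<^sub>i = q\<^sub>i (L / A\<^sub>i) + r\<^sub>i\<close> with
  \<open>r\<^sub>i < L / A\<^sub>i\<close>, the remainders contribute less than \<open>n L\<close>, so \<open>\<Sum> q\<^sub>i \<ge> k\<close>, and
  \<open>k\<close> of the blocks \<open>X\<^sub>i\<^bsup>L/A\<^sub>i\<^esup>\<close> (each of degree \<open>L\<close>) can be split off.
  Since \<open>p \<ge> 2\<close>, every monomial of degree at least \<open>p m L \<ge> (m + n - 1) L\<close> is thus a product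
  of one of degree at least \<open>(p - 1) m L\<close> and one of degree exactly \<open>m L\<close>, whence
  \<open>R\<^bsub>\<ge>(p-1)mL\<^esub> \<cdot> R\<^bsub>\<ge>mL\<^esub> = R\<^bsub>\<ge>pmL\<^esub>\<close>.\<close>

lemma exists_bounded_summands:
  fixes q :: "'a \<Rightarrow> nat"
  assumes "finite S" and "k \<le> sum q S"
  shows "\<exists>t. (\<forall>i\<in>S. t i \<le> q i) \<and> sum t S = k"
  using assms
proof (induction S arbitrary: k rule: finite_induct)
  case empty
  then show ?case by simp
next
  case (insert x S)
  show ?case
  proof (cases "k \<le> sum q S")
    case True
    with insert.IH obtain t where "\<forall>i\<in>S. t i \<le> q i" "sum t S = k" by blast
    moreover have "sum (t(x := 0)) S = sum t S"
      using insert.hyps by (intro sum.cong) auto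
    ultimately show ?thesis
      using insert.hyps by (intro exI[of _ "t(x := 0)"]) auto
  next
    case False
    moreover have "sum (q(x := k - sum q S)) S = sum q S"
      using insert.hyps by (intro sum.cong) auto
    ultimately show ?thesis
      using insert by (intro exI[of _ "q(x := k - sum q S)"]) auto
  qed
qed

lemma exists_weighted_subsum_eq_Lcm_multiple:
  fixes A e :: "'n::finite \<Rightarrow> nat"
  assumes weights_pos: "\<forall>i. A i > 0"
    and big: "(k + card (UNIV :: 'n set) - 1) * Lcm (A ` UNIV) \<le> (\<Sum>i\<in>UNIV. e i * A i)"
  shows "\<exists>t. (\<forall>i. t i \<le> e i) \<and> (\<Sum>i\<in>UNIV. t i * A i) = k * Lcm (A ` UNIV)"
proof -
  define L where "L = Lcm (A ` UNIV)"
  define B where "B i = L div A i" for i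
  define q where "q i = e i div B i" for i
  have L_pos: "L > 0"
    using weights_pos Lcm_0_iff[OF finite_imageI[OF finite_UNIV], of A]
    by (auto simp: L_def intro!: gr0I) (metis less_irrefl)
  have BA: "B i * A i = L" for i
    by (simp add: B_def L_def dvd_Lcm)
  then have B_pos: "B i > 0" for i
    using L_pos by (metis gr0I mult_zero_left)
  have "e i < (q i + 1) * B i" for i
  proof -
    have "e i = q i * B i + e i mod B i"
      unfolding q_def by (rule div_mult_mod_eq[symmetric])
    moreover have "e i mod B i < B i" using B_pos by simp
    ultimately show ?thesis by (simp add: algebra_simps)
  qed
  then have "e i * A i < (q i + 1) * L" for i
    using weights_pos BA by (metis mult.assoc mult_less_mono1)
  then have "(\<Sum>i\<in>UNIV. e i * A i) < (\<Sum>i\<in>UNIV. (q i + 1) * L)"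
    by (intro sum_strict_mono) auto
  also have "\<dots> = ((\<Sum>i\<in>UNIV. q i) + card (UNIV :: 'n set)) * L"
    by (simp add: sum.distrib sum_distrib_left sum_distrib_right algebra_simps)
  finally have "k + card (UNIV :: 'n set) - 1 < (\<Sum>i\<in>UNIV. q i) + card (UNIV :: 'n set)"
    using big mult_less_cancel2 unfolding L_def by (metis le_less_trans)
  then have "k \<le> (\<Sum>i\<in>UNIV. q i)" by linarith
  then obtain t where t_le: "\<forall>i. t i \<le> q i" and t_sum: "(\<Sum>i\<in>UNIV. t i) = k"
    using exists_bounded_summands[of UNIV k q] by auto
  show ?thesis
  proof (intro exI[of _ "\<lambda>i. t i * B i"] conjI allI)
    fix i
    have "t i * B i \<le> q i * B i" using t_le by simp
    also have "\<dots> \<le> e i" by (simp add: q_def)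
    finally show "t i * B i \<le> e i" .
  next
    have "(\<Sum>i\<in>UNIV. t i * B i * A i) = (\<Sum>i\<in>UNIV. t i) * L"
      by (simp add: BA sum_distrib_right mult.assoc)
    then show "(\<Sum>i\<in>UNIV. t i * B i * A i) = k * Lcm (A ` UNIV)"
      by (simp add: t_sum L_def)
  qed
qed

lemma wdeg_add: "wdeg A (a + b) = wdeg A a + wdeg A b"
  by (simp add: wdeg_def lookup_add algebra_simps sum.distrib)

lemma monomial_split_off_Lcm_multiple:
  fixes A :: "'n::finite \<Rightarrow> nat" and e :: "'n \<Rightarrow>\<^sub>0 nat"
  assumes weights_pos: "\<forall>i. A i > 0"
    and big: "(k + card (UNIV :: 'n set) - 1) * Lcm (A ` UNIV) \<le> wdeg A e"
    and e_deg: "\<alpha> + k * Lcm (A ` UNIV) \<le> wdeg A e"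
  shows "\<exists>e1 e2. e = e1 + e2 \<and> \<alpha> \<le> wdeg A e1 \<and> k * Lcm (A ` UNIV) \<le> wdeg A e2"
proof -
  obtain t where t_le: "\<forall>i. t i \<le> Poly_Mapping.lookup e i"
    and t_sum: "(\<Sum>i\<in>UNIV. t i * A i) = k * Lcm (A ` UNIV)"
    using exists_weighted_subsum_eq_Lcm_multiple[of A k "Poly_Mapping.lookup e"] weights_pos big
    by (auto simp: wdeg_def)
  define e2 where "e2 = Abs_poly_mapping t"
  define e1 where "e1 = Abs_poly_mapping (\<lambda>i. Poly_Mapping.lookup e i - t i)"
  have e: "e = e1 + e2"
    by (rule poly_mapping_eqI) (simp add: e1_def e2_def lookup_add t_le)
  moreover have e2_deg: "wdeg A e2 = k * Lcm (A ` UNIV)"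
    by (simp add: e2_def wdeg_def t_sum)
  moreover have "\<alpha> \<le> wdeg A e1"
    using e_deg by (simp add: e e2_deg wdeg_add)
  ultimately show ?thesis by (intro exI[of _ e1] exI[of _ e2]) simp
qed

lemma poly_ring_simps [simp]:
  "carrier poly_ring = UNIV" "monoid.mult poly_ring = (*)" "one poly_ring = 1"
  "zero poly_ring = 0" "add poly_ring = (+)"
  by (simp_all add: poly_ring_def)

lemma cring_poly_ring: "cring (poly_ring :: ('n, 'k::comm_ring_1) mpoly ring)"
proof (rule cringI)
  show "abelian_group (poly_ring :: ('n, 'k) mpoly ring)"
    by (rule abelian_groupI) (auto simp: algebra_simps intro: exI[of _ "- _"])
  show "Group.comm_monoid (poly_ring :: ('n, 'k) mpoly ring)"
    by (rule comm_monoidI) (auto simp: algebra_simps)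
qed (auto simp: distrib_right)

interpretation poly_ring: cring "poly_ring :: ('n, 'k::comm_ring_1) mpoly ring"
  by (rule cring_poly_ring)

lemma a_inv_poly_ring [simp]: "a_inv poly_ring f = - f"
  by (rule poly_ring.minus_equality) auto

definition polys_wdeg_ge :: "('n::finite \<Rightarrow> nat) \<Rightarrow> nat \<Rightarrow> ('n, 'k::comm_ring_1) mpoly set" where
  "polys_wdeg_ge A \<alpha> = {f. \<forall>a\<in>Poly_Mapping.keys f. \<alpha> \<le> wdeg A a}"

lemma single_in_polys_wdeg_ge: "\<alpha> \<le> wdeg A e \<Longrightarrow> Poly_Mapping.single e c \<in> polys_wdeg_ge A \<alpha>"
  by (simp add: polys_wdeg_ge_def)

lemma mult_in_polys_wdeg_ge:
  "f \<in> polys_wdeg_ge A \<alpha> \<Longrightarrow> g \<in> polys_wdeg_ge A \<beta> \<Longrightarrow> f * g \<in> polys_wdeg_ge A (\<alpha> + \<beta>)"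
  unfolding polys_wdeg_ge_def using keys_mult[of f g] by (force simp: wdeg_add)

lemma ideal_polys_wdeg_ge:
  "ideal (polys_wdeg_ge A \<alpha> :: ('n::finite, 'k::comm_ring_1) mpoly set) poly_ring"
proof (rule idealI)
  show "subgroup (polys_wdeg_ge A \<alpha>) (add_monoid poly_ring)"
  proof (rule poly_ring.add.subgroupI)
    show "polys_wdeg_ge A \<alpha> \<noteq> {}"
      by (auto simp: polys_wdeg_ge_def intro!: exI[of _ 0])
  qed (use keys_add in \<open>fastforce simp: polys_wdeg_ge_def in_keys_iff\<close>)+
next
  fix f g :: "('n, 'k) mpoly"
  assume "f \<in> polys_wdeg_ge A \<alpha>"
  then have "g * f \<in> polys_wdeg_ge A (0 + \<alpha>)"
    by (intro mult_in_polys_wdeg_ge) (auto simp: polys_wdeg_ge_def)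
  then show "g \<otimes>\<^bsub>poly_ring\<^esub> f \<in> polys_wdeg_ge A \<alpha>" and "f \<otimes>\<^bsub>poly_ring\<^esub> g \<in> polys_wdeg_ge A \<alpha>"
    by (simp_all add: mult.commute)
qed (rule poly_ring.ring_axioms)

lemma sum_single_lookup_keys:
  "(\<Sum>a\<in>Poly_Mapping.keys f. Poly_Mapping.single a (Poly_Mapping.lookup f a)) = f"
  by (rule poly_mapping_eqI) (simp add: lookup_sum lookup_single when_def in_keys_iff)

lemma polys_wdeg_ge_subset_ideal:
  fixes I :: "('n::finite, 'k::comm_ring_1) mpoly set"
  assumes I: "ideal I poly_ring"
    and monomials: "\<And>e c. \<alpha> \<le> wdeg A e \<Longrightarrow> Poly_Mapping.single e c \<in> I"
  shows "polys_wdeg_ge A \<alpha> \<subseteq> I"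
proof
  fix f :: "('n, 'k) mpoly"
  assume f: "f \<in> polys_wdeg_ge A \<alpha>"
  interpret I: ideal I poly_ring by (rule I)
  have "(\<Sum>a\<in>K. Poly_Mapping.single a (Poly_Mapping.lookup f a)) \<in> I" if "K \<subseteq> Poly_Mapping.keys f" for K
    using finite_subset[OF that finite_keys] that
  proof (induction K rule: finite_subset_induct)
    case empty
    then show ?case using I.zero_closed by simp
  next
    case (insert a K)
    then show ?case
      using f monomials[of a] I.a_closed by (auto simp: polys_wdeg_ge_def)
  qed
  from this[of "Poly_Mapping.keys f"] show "f \<in> I"
    by (simp add: sum_single_lookup_keys)
qed

context
  fixes J :: "('n::finite, 'k::comm_ring_1) mpoly set"
  assumes J: "ideal J poly_ring"
begin

interpretation J: ideal J poly_ring by (rule J)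

lemma rcos_mult:
  "J +>\<^bsub>poly_ring\<^esub> (f * g) = (J +>\<^bsub>poly_ring\<^esub> f) \<otimes>\<^bsub>quot_ring J\<^esub> (J +>\<^bsub>poly_ring\<^esub> g)"
  using ring_hom_mult[OF J.rcos_ring_hom, of f g] by simp

lemma polys_wdeg_ge_subset_vimage:
  assumes X: "ideal X (quot_ring J)"
    and monomials: "\<And>e c. \<alpha> \<le> wdeg A e \<Longrightarrow> J +>\<^bsub>poly_ring\<^esub> Poly_Mapping.single e c \<in> X"
  shows "polys_wdeg_ge A \<alpha> \<subseteq> {f. J +>\<^bsub>poly_ring\<^esub> f \<in> X}"
  using ring_hom_ring.ideal_vimage[OF J.rcos_ring_hom_ring X] monomials
  by (intro polys_wdeg_ge_subset_ideal) simp_all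

lemma R_ge_eq_image: "R_ge A J \<alpha> = (\<lambda>f. J +>\<^bsub>poly_ring\<^esub> f) ` polys_wdeg_ge A \<alpha>"
proof
  have "ideal ((\<lambda>f. J +>\<^bsub>poly_ring\<^esub> f) ` polys_wdeg_ge A \<alpha>) (quot_ring J)"
    using poly_ring.ring_ideal_imp_quot_ideal[OF J ideal_polys_wdeg_ge] by simp
  moreover have "(\<Union>d\<in>{\<alpha>..}. R_hom A J d) \<subseteq> (\<lambda>f. J +>\<^bsub>poly_ring\<^esub> f) ` polys_wdeg_ge A \<alpha>"
    by (auto simp: R_hom_def whomogeneous_def polys_wdeg_ge_def)
  ultimately show "R_ge A J \<alpha> \<subseteq> (\<lambda>f. J +>\<^bsub>poly_ring\<^esub> f) ` polys_wdeg_ge A \<alpha>"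
    unfolding R_ge_def by (rule ring.genideal_minimal[OF J.quotient_is_ring])
next
  have gens: "(\<Union>d\<in>{\<alpha>..}. R_hom A J d) \<subseteq> carrier (quot_ring J)"
    using ring_hom_closed[OF J.rcos_ring_hom] by (auto simp: R_hom_def)
  have "J +>\<^bsub>poly_ring\<^esub> Poly_Mapping.single e c \<in> R_ge A J \<alpha>" if "\<alpha> \<le> wdeg A e" for e c
  proof -
    have "J +>\<^bsub>poly_ring\<^esub> Poly_Mapping.single e c \<in> R_hom A J (wdeg A e)"
      unfolding R_hom_def whomogeneous_def by (auto split: if_splits)
    then show ?thesis
      unfolding R_ge_def using that ring.genideal_self[OF J.quotient_is_ring gens] by blast
  qed
  with polys_wdeg_ge_subset_vimage[OF ring.genideal_ideal[OF J.quotient_is_ring gens]]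
  show "(\<lambda>f. J +>\<^bsub>poly_ring\<^esub> f) ` polys_wdeg_ge A \<alpha> \<subseteq> R_ge A J \<alpha>"
    unfolding R_ge_def by blast
qed

lemma ideal_R_ge: "ideal (R_ge A J \<alpha>) (quot_ring J)"
  using poly_ring.ring_ideal_imp_quot_ideal[OF J ideal_polys_wdeg_ge] by (simp add: R_ge_eq_image)

lemma ideal_prod_R_ge:
  assumes split: "\<And>e. \<alpha> + \<beta> \<le> wdeg A e \<Longrightarrow>
      \<exists>e1 e2. e = e1 + e2 \<and> \<alpha> \<le> wdeg A e1 \<and> \<beta> \<le> wdeg A e2"
  shows "ideal_prod (quot_ring J) (R_ge A J \<alpha>) (R_ge A J \<beta>) = R_ge A J (\<alpha> + \<beta>)"
proof
  show "ideal_prod (quot_ring J) (R_ge A J \<alpha>) (R_ge A J \<beta>) \<subseteq> R_ge A J (\<alpha> + \<beta>)"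
  proof
    fix x assume "x \<in> ideal_prod (quot_ring J) (R_ge A J \<alpha>) (R_ge A J \<beta>)"
    then show "x \<in> R_ge A J (\<alpha> + \<beta>)"
    proof (induction x rule: ideal_prod.induct)
      case (prod i j)
      then obtain f g where "f \<in> polys_wdeg_ge A \<alpha>" "g \<in> polys_wdeg_ge A \<beta>"
        and "i \<otimes>\<^bsub>quot_ring J\<^esub> j = J +>\<^bsub>poly_ring\<^esub> (f * g)"
        by (auto simp: R_ge_eq_image rcos_mult)
      then show ?case
        by (auto simp: R_ge_eq_image intro: mult_in_polys_wdeg_ge)
    next
      case (sum s1 s2)
      then show ?case using additive_subgroup.a_closed[OF ideal.axioms(1)[OF ideal_R_ge]] by blast
    qed
  qed
next
  have "J +>\<^bsub>poly_ring\<^esub> Poly_Mapping.single e c \<in> ideal_prod (quot_ring J) (R_ge A J \<alpha>) (R_ge A J \<beta>)"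
    if e_deg: "\<alpha> + \<beta> \<le> wdeg A e" for e c
  proof -
    obtain e1 e2 where e: "e = e1 + e2" "\<alpha> \<le> wdeg A e1" "\<beta> \<le> wdeg A e2"
      using split[OF e_deg] by blast
    have "Poly_Mapping.single e c = Poly_Mapping.single e1 c * Poly_Mapping.single e2 1"
      by (simp add: mult_single e(1))
    then show ?thesis
      using single_in_polys_wdeg_ge[OF e(2)] single_in_polys_wdeg_ge[OF e(3)]
      by (auto simp: rcos_mult R_ge_eq_image intro!: ideal_prod.prod)
  qed
  then have "polys_wdeg_ge A (\<alpha> + \<beta>)
      \<subseteq> {f. J +>\<^bsub>poly_ring\<^esub> f \<in> ideal_prod (quot_ring J) (R_ge A J \<alpha>) (R_ge A J \<beta>)}"
    by (intro polys_wdeg_ge_subset_vimage ring.ideal_prod_is_ideal J.quotient_is_ring ideal_R_ge)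
  then show "R_ge A J (\<alpha> + \<beta>) \<subseteq> ideal_prod (quot_ring J) (R_ge A J \<alpha>) (R_ge A J \<beta>)"
    unfolding R_ge_eq_image[of A "\<alpha> + \<beta>"] by blast
qed

end

theorem mainTheorem2:
  fixes A :: "'n::finite \<Rightarrow> nat"
    and J :: "('n, 'k::idom) mpoly set"
    and m p :: nat
  assumes weights_pos: "\<forall>i. A i > 0"
    and m_def: "m = card (UNIV :: 'n set) - 1"
    and J_hom: "homogeneous_ideal A J"
    and R_domain: "domain (quot_ring J)"
    and p_ge: "p \<ge> 2"
    and hyp: "ideal_power (quot_ring J) (R_ge A J (m * Lcm (A ` UNIV))) (p - 1)
              = R_ge A J ((p - 1) * m * Lcm (A ` UNIV))"
  shows "ideal_power (quot_ring J) (R_ge A J (m * Lcm (A ` UNIV))) p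
         = R_ge A J (p * m * Lcm (A ` UNIV))"
proof -
  define L where "L = Lcm (A ` UNIV)"
  have J: "ideal J poly_ring"
    using J_hom by (simp add: homogeneous_ideal_def)
  have degree_sum: "(p - 1) * m * L + m * L = p * m * L"
    using p_ge by (simp add: algebra_simps flip: mult_Suc)
  have split: "\<exists>e1 e2. e = e1 + e2 \<and> (p - 1) * m * L \<le> wdeg A e1 \<and> m * L \<le> wdeg A e2"
    if e_deg: "(p - 1) * m * L + m * L \<le> wdeg A e" for e
  proof -
    have "m + card (UNIV :: 'n set) - 1 = 2 * m"
      using m_def card_gt_0_iff[of "UNIV :: 'n set"] by simp
    then have "(m + card (UNIV :: 'n set) - 1) * L \<le> wdeg A e"
      using p_ge e_deg degree_sum by (metis le_trans mult_le_mono1)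
    then show ?thesis
      using monomial_split_off_Lcm_multiple[OF weights_pos] e_deg unfolding L_def by blast
  qed
  have "ideal_power (quot_ring J) (R_ge A J (m * L)) p
      = ideal_power (quot_ring J) (R_ge A J (m * L)) (Suc (p - 1))"
    using p_ge by simp
  also have "\<dots> = ideal_prod (quot_ring J)
      (ideal_power (quot_ring J) (R_ge A J (m * L)) (p - 1)) (R_ge A J (m * L))"
    by (simp add: ideals_set_def)
  also have "\<dots> = ideal_prod (quot_ring J) (R_ge A J ((p - 1) * m * L)) (R_ge A J (m * L))"
    using hyp by (simp add: L_def)
  also have "\<dots> = R_ge A J (p * m * L)"
    using ideal_prod_R_ge[OF J split] unfolding degree_sum .
  finally show ?thesis by (simp add: L_def)
qed

end
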